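(* Let $G=(V,E)$ be a connected finite multigraph without loops with $n=|V|\ge 2$, let $f$ be an admissible function, and let $w$ be a weight function for $G$ (extended to a homomorphism $\mathcal E(G)\to\mathbb Z$). For every $\phi\in\mathcal T(G)$ there exists a nonempty proper subset $S\subset V$ such that $d^f_G(S,\bar S)\le d^f_G(\phi)$. In particular, \[ \min_{\phi\in\mathcal T(G)} d^f_G(\phi)=d^f(G). \]
   Context: An admissible function is a function $f:[0,1]\to[0,\infty)$ that is concave and increasing on $[0,\tfrac12]$ and satisfies $f(x)=f(1-x)$ for all $x\in[0,1]$. For nonempty proper $S\subset V$, $\bar S=V\setminus S$, the cut $[S,\bar S]$ is the set of edges between $S$ and $\bar S$, $b(S,\bar S)=\min(|S|,|\bar S|)/n$, $d^f_G(S,\bar S)=|[S,\bar S]|/f(b(S,\bar S))$ (set to $+\infty$ if the denominator is $0$), and $d^f(G)=\min_S d^f_G(S,\bar S)$. Oriented edges: each edge $e$ with endpoints $a,b$ has orientations $(a,e,b)$ and $(b,e,a)$; if $\overrightarrow e$ is one, $\overleftarrow e$ is the other; $\vec E$ is the set of all orientations. The edge space $\mathcal E(G)$ is the free abelian group on $\vec E$ modulo the relations $\overleftarrow e=-\overrightarrow e$. Each $\rho\in\mathcal E(G)$ is uniquely $\rho=\sum_{\overrightarrow e\in\vec E}\lambda_{\overrightarrow e}\overrightarrow e$ with integers $\lambda_{\overrightarrow e}$ satisfying $\min(\lambda_{\overrightarrow e},\lambda_{\overleftarrow e})=0$; set $|\rho|=\sum\lambda_{\overrightarrow e}$. For $S\subseteq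 V$, $\overrightarrow{[S,\bar S]}=\sum(a,e,b)\in\mathcal E(G)$, summed over edges $e$ joining $a\in S$ to $b\notin S$. The cut space $\mathcal T(G)$ is the subgroup of $\mathcal E(G)$ generated by all $\overrightarrow{[S,\bar S]}$, $S\subseteq V$. A weight function for $G$ is a map $w:\vec E\to\mathbb Z$, with respect to some fixed vertex $v$, satisfying $w(\overleftarrow e)=-w(\overrightarrow e)$, $|w(\overrightarrow e)|\le n$ for all $\overrightarrow e$, and $\sum_{(a,e,b)\in\overrightarrow{[S,\bar S]}}w(a,e,b)=|\bar S|$ whenever $v\in S\subseteq V$; by the first property it extends to a group homomorphism $w:\mathcal E(G)\to\mathbb Z$. For $\phi\in\mathcal T(G)$ define $d^f_G(\phi)=|\phi|/f(|w(\phi)|/n)$, with the convention $d^f_G(\phi)=+\infty$ if $w(\phi)=0$, if $|w(\phi)|>n$, or if $f(|w(\phi)|/n)=0$. (For $\phi=\overrightarrow{[S,\bar S]}$ this agrees with $d^f_G(S,\bar S)$.) *)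

theory Defs
  imports "HOL-Analysis.Analysis" "HOL-Library.Extended_Real"
begin

text \<open>A finite multigraph: vertex set V, edge set E, each edge e has a reference
orientation from src e to tgt e. The oriented edge (src e, e, tgt e) is the
reference orientation; (tgt e, e, src e) is its reverse.
An element of the edge space E(G) is represented by its coefficient function
c :: 'e => int supported on E, where c e is the coefficient of the reference
orientation (a negative value means the reverse orientation carries |c e|).\<close>

definition multigraph :: "'v set \<Rightarrow> 'e set \<Rightarrow> ('e \<Rightarrow> 'v) \<Rightarrow> ('e \<Rightarrow> 'v) \<Rightarrow> bool" where
  "multigraph V E src tgt \<longleftrightarrow> finite V \<and> finite E \<and> (\<forall>e\<in>E. src e \<in> V \<and> tgt e \<in> V)"

definition loopless :: "'e set \<Rightarrow> ('e \<Rightarrow> 'v) \<Rightarrow> ('e \<Rightarrow> 'v) \<Rightarrow> bool" where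
  "loopless E src tgt \<longleftrightarrow> (\<forall>e\<in>E. src e \<noteq> tgt e)"

definition adj_rel :: "'e set \<Rightarrow> ('e \<Rightarrow> 'v) \<Rightarrow> ('e \<Rightarrow> 'v) \<Rightarrow> ('v \<times> 'v) set" where
  "adj_rel E src tgt = (\<Union>e\<in>E. {(src e, tgt e), (tgt e, src e)})"

definition connected_mg :: "'v set \<Rightarrow> 'e set \<Rightarrow> ('e \<Rightarrow> 'v) \<Rightarrow> ('e \<Rightarrow> 'v) \<Rightarrow> bool" where
  "connected_mg V E src tgt \<longleftrightarrow> (\<forall>u\<in>V. \<forall>v\<in>V. (u, v) \<in> (adj_rel E src tgt)\<^sup>*)"

definition admissible :: "(real \<Rightarrow> real) \<Rightarrow> bool" where
  "admissible f \<longleftrightarrow> (\<forall>x\<in>{0..1}. f x \<ge> 0) \<and> concave_on {0..1/2} f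
     \<and> mono_on {0..1/2} f \<and> (\<forall>x\<in>{0..1}. f x = f (1 - x))"

definition edge_space :: "'e set \<Rightarrow> ('e \<Rightarrow> int) set" where
  "edge_space E = {c. \<forall>e. e \<notin> E \<longrightarrow> c e = 0}"

text \<open>|rho|: sum of the (nonnegative) coefficients in the normal form.\<close>
definition rho_norm :: "'e set \<Rightarrow> ('e \<Rightarrow> int) \<Rightarrow> int" where
  "rho_norm E c = (\<Sum>e\<in>E. \<bar>c e\<bar>)"

definition cut_vec :: "'e set \<Rightarrow> ('e \<Rightarrow> 'v) \<Rightarrow> ('e \<Rightarrow> 'v) \<Rightarrow> 'v set \<Rightarrow> 'e \<Rightarrow> int" where
  "cut_vec E src tgt S e =
     (if e \<in> E \<and> src e \<in> S \<and> tgt e \<notin> S then 1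
      else if e \<in> E \<and> tgt e \<in> S \<and> src e \<notin> S then -1 else 0)"

inductive_set cut_space :: "'v set \<Rightarrow> 'e set \<Rightarrow> ('e \<Rightarrow> 'v) \<Rightarrow> ('e \<Rightarrow> 'v) \<Rightarrow> ('e \<Rightarrow> int) set"
  for V E src tgt where
  zero: "(\<lambda>e. 0) \<in> cut_space V E src tgt"
| gen: "S \<subseteq> V \<Longrightarrow> cut_vec E src tgt S \<in> cut_space V E src tgt"
| diff: "x \<in> cut_space V E src tgt \<Longrightarrow> y \<in> cut_space V E src tgt \<Longrightarrow>
         (\<lambda>e. x e - y e) \<in> cut_space V E src tgt"

definition cut_size :: "'e set \<Rightarrow> ('e \<Rightarrow> 'v) \<Rightarrow> ('e \<Rightarrow> 'v) \<Rightarrow> 'v set \<Rightarrow> nat" where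
  "cut_size E src tgt S = card {e\<in>E. (src e \<in> S) \<noteq> (tgt e \<in> S)}"

text \<open>Weight function w, given by its value w0 e = w(src e, e, tgt e) on the reference
orientation; w(tgt e, e, src e) = - w0 e. Extended to the edge space as a homomorphism.\<close>
definition w_ext :: "'e set \<Rightarrow> ('e \<Rightarrow> int) \<Rightarrow> ('e \<Rightarrow> int) \<Rightarrow> int" where
  "w_ext E w0 c = (\<Sum>e\<in>E. c e * w0 e)"

definition weight_function ::
  "'v set \<Rightarrow> 'e set \<Rightarrow> ('e \<Rightarrow> 'v) \<Rightarrow> ('e \<Rightarrow> 'v) \<Rightarrow> 'v \<Rightarrow> ('e \<Rightarrow> int) \<Rightarrow> bool" where
  "weight_function V E src tgt v w0 \<longleftrightarrow> v \<in> V \<and>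
     (\<forall>e\<in>E. \<bar>w0 e\<bar> \<le> int (card V)) \<and>
     (\<forall>S. v \<in> S \<and> S \<subseteq> V \<longrightarrow>
        (\<Sum>e\<in>{e\<in>E. src e \<in> S \<and> tgt e \<notin> S}. w0 e)
      + (\<Sum>e\<in>{e\<in>E. tgt e \<in> S \<and> src e \<notin> S}. - w0 e) = int (card (V - S)))"

definition d_cut :: "'v set \<Rightarrow> 'e set \<Rightarrow> ('e \<Rightarrow> 'v) \<Rightarrow> ('e \<Rightarrow> 'v) \<Rightarrow> (real \<Rightarrow> real) \<Rightarrow> 'v set \<Rightarrow> ereal" where
  "d_cut V E src tgt f S =
     (let b = real (min (card S) (card (V - S))) / real (card V) in
      if f b = 0 then \<infinity> else ereal (real (cut_size E src tgt S) / f b))"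

definition d_graph :: "'v set \<Rightarrow> 'e set \<Rightarrow> ('e \<Rightarrow> 'v) \<Rightarrow> ('e \<Rightarrow> 'v) \<Rightarrow> (real \<Rightarrow> real) \<Rightarrow> ereal" where
  "d_graph V E src tgt f = Min (d_cut V E src tgt f ` {S. S \<noteq> {} \<and> S \<subset> V})"

definition d_phi :: "'v set \<Rightarrow> 'e set \<Rightarrow> (real \<Rightarrow> real) \<Rightarrow> ('e \<Rightarrow> int) \<Rightarrow> ('e \<Rightarrow> int) \<Rightarrow> ereal" where
  "d_phi V E f w0 \<phi> =
     (let k = w_ext E w0 \<phi>; n = card V in
      if k = 0 \<or> \<bar>k\<bar> > int n \<or> f (real_of_int \<bar>k\<bar> / real n) = 0 then \<infinity>
      else ereal (real_of_int (rho_norm E \<phi>) / f (real_of_int \<bar>k\<bar> / real n)))"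

end

theory Submission imports Defs begin

text \<open>
  Extend \<open>f\<close> to the 1-periodic even function \<open>F y = f (dist y \<int>)\<close>; concavity,
  monotonicity and symmetry make \<open>F\<close> subadditive, and \<open>F\<close> agrees with \<open>f\<close> on \<open>[0,1]\<close>.
  For a cut, \<open>w\<close> takes the value \<open>|V - S|\<close> or \<open>-|S|\<close>, so \<open>F (w(S)/n) = f (b S)\<close>.
  Every \<open>\<phi>\<close> in the cut space is a potential difference \<open>\<phi> e = x (src e) - x (tgt e)\<close>.
  Lowering \<open>x\<close> by one on its top level set \<open>S\<close> splits \<open>\<phi> = \<phi>' + [S]\<close> with
  \<open>|\<phi>| = |\<phi>'| + |[S]|\<close>; by induction on the range of \<open>x\<close> and subadditivity of \<open>F\<close>,
  \<open>r * F (w(\<phi>)/n) \<le> |\<phi>|\<close> whenever \<open>r * f (b S) \<le> |[S]|\<close> for all cuts.  Taking \<open>r\<close>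
  the minimal cut ratio gives the claim; the other two conjuncts follow because every cut
  lies in the cut space and its two ratios coincide.
\<close>

definition dist_int :: "real \<Rightarrow> real" where
  "dist_int y = \<bar>y - of_int (round y)\<bar>"

lemma dist_int_le: "dist_int y \<le> \<bar>y - of_int k\<bar>"
proof -
  have round: "y - 1/2 \<le> of_int (round y)" "of_int (round y) \<le> y + 1/2"
    using of_int_round_ge of_int_round_le by auto
  consider "k \<le> round y - 1" | "k = round y" | "k \<ge> round y + 1" by linarith
  then show ?thesis
  proof cases
    case 1
    then have "(of_int k :: real) \<le> of_int (round y) - 1" by (metis of_int_diff of_int_le_iff of_int_1)
    then show ?thesis using round unfolding dist_int_def by linarith
  next
    case 2
    then show ?thesis unfolding dist_int_def by simp
  next
    case 3
    then have "(of_int k :: real) \<ge> of_int (round y) + 1" by (metis of_int_add of_int_le_iff of_int_1)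
    then show ?thesis using round unfolding dist_int_def by linarith
  qed
qed

lemma dist_int_range: "0 \<le> dist_int y" "dist_int y \<le> 1/2"
  using of_int_round_ge[of y] of_int_round_le[of y] unfolding dist_int_def
  by (simp_all only: abs_le_iff abs_ge_zero, linarith)

lemma dist_int_add: "dist_int (y + z) \<le> dist_int y + dist_int z"
proof -
  have "dist_int (y + z) \<le> \<bar>y + z - of_int (round y + round z)\<bar>" by (rule dist_int_le)
  also have "\<dots> \<le> dist_int y + dist_int z" unfolding dist_int_def by simp
  finally show ?thesis .
qed

lemma dist_int_uminus: "dist_int (- y) = dist_int y"
proof -
  have "dist_int (- y) \<le> dist_int y"
    using dist_int_le[of "- y" "- round y"] unfolding dist_int_def by simp
  moreover have "dist_int y \<le> dist_int (- y)"
    using dist_int_le[of y "- round (- y)"] unfolding dist_int_def by simp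
  ultimately show ?thesis by simp
qed

lemma dist_int_unit_interval:
  assumes "0 \<le> y" "y \<le> 1" shows "dist_int y = min y (1 - y)"
proof -
  have "min y (1 - y) \<le> \<bar>y - of_int k\<bar>" for k
  proof (cases "k \<le> 0")
    case True
    then have "(of_int k :: real) \<le> 0" by simp
    then show ?thesis by simp
  next
    case False
    then have "(of_int k :: real) \<ge> 1" by simp
    then show ?thesis by simp
  qed
  moreover have "dist_int y \<le> y" "dist_int y \<le> 1 - y"
    using dist_int_le[of y 0] dist_int_le[of y 1] assms by simp_all
  ultimately show ?thesis unfolding dist_int_def by (meson min.bounded_iff order_antisym)
qed

text \<open>A concave function on \<open>[0,c]\<close> with \<open>f 0 \<ge> 0\<close> is subadditive there: both \<open>f a\<close> and
  \<open>f b\<close> lie above the chord from \<open>(0, f 0)\<close> to \<open>(a+b, f (a+b))\<close>.\<close>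
lemma concave_subadditive:
  fixes f :: "real \<Rightarrow> real"
  assumes cc: "concave_on {0..c} f" and f0: "0 \<le> f 0"
    and "0 \<le> a" "0 \<le> b" "a + b \<le> c"
  shows "f (a + b) \<le> f a + f b"
proof (cases "a + b = 0")
  case True
  then have "a = 0" "b = 0" using assms by auto
  then show ?thesis using f0 by simp
next
  case False
  then have s: "a + b > 0" using assms by auto
  have chord: "f t \<ge> (1 - t / (a + b)) * f 0 + (t / (a + b)) * f (a + b)"
    if "0 \<le> t" "t \<le> a + b" for t
  proof -
    have "f ((1 - t/(a+b)) *\<^sub>R 0 + (t/(a+b)) *\<^sub>R (a+b)) \<ge> (1 - t/(a+b)) * f 0 + (t/(a+b)) * f (a+b)"
      by (rule concave_onD[OF cc]) (use assms s that in auto)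
    then show ?thesis using s by simp
  qed
  have "(1 - a/(a+b)) * f 0 \<ge> 0" "(1 - b/(a+b)) * f 0 \<ge> 0"
    using assms s f0 by (auto simp: field_simps)
  moreover have "(a/(a+b)) * f (a+b) + (b/(a+b)) * f (a+b) = f (a+b)"
    using s by (simp flip: distrib_right add_divide_distrib)
  ultimately show ?thesis using chord[of a] chord[of b] assms by linarith
qed

lemma admissible_nonneg: "admissible f \<Longrightarrow> 0 \<le> x \<Longrightarrow> x \<le> 1 \<Longrightarrow> 0 \<le> f x"
  unfolding admissible_def by (meson atLeastAtMost_iff)

lemma admissible_concave: "admissible f \<Longrightarrow> concave_on {0..1/2} f"
  unfolding admissible_def by blast

lemma admissible_mono: "admissible f \<Longrightarrow> 0 \<le> x \<Longrightarrow> x \<le> y \<Longrightarrow> y \<le> 1/2 \<Longrightarrow> f x \<le> f y"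
  unfolding admissible_def by (meson atLeastAtMost_iff mono_onD order_trans)

lemma admissible_symmetric: "admissible f \<Longrightarrow> 0 \<le> x \<Longrightarrow> x \<le> 1 \<Longrightarrow> f (1 - x) = f x"
  unfolding admissible_def by (metis atLeastAtMost_iff)

text \<open>By concavity, an admissible function positive at \<open>1/2\<close> is positive on \<open>(0,1/2]\<close>.\<close>
lemma admissible_pos:
  assumes f: "admissible f" and half: "f (1/2) > 0" and "0 < b" "b \<le> 1/2"
  shows "f b > 0"
proof -
  have "f ((1 - 2 * b) *\<^sub>R 0 + (2 * b) *\<^sub>R (1/2)) \<ge> (1 - 2 * b) * f 0 + (2 * b) * f (1/2)"
    by (rule concave_onD[OF admissible_concave[OF f]]) (use assms in auto)
  moreover have "(1 - 2 * b) * f 0 \<ge> 0" using assms admissible_nonneg[OF f, of 0] by auto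
  moreover have "(2 * b) * f (1/2) > 0" using assms by auto
  ultimately show ?thesis by simp
qed

text \<open>The 1-periodic even extension of \<open>f|[0,1/2]\<close>.\<close>
definition periodic_ext :: "(real \<Rightarrow> real) \<Rightarrow> real \<Rightarrow> real" where
  "periodic_ext f y = f (dist_int y)"

text \<open>Subadditivity of the periodic extension: if the two distances add up to at most \<open>1/2\<close>
  use monotonicity and subadditivity of \<open>f\<close>, otherwise bound by \<open>f (1/2)\<close>.\<close>
lemma periodic_ext_add:
  assumes f: "admissible f"
  shows "periodic_ext f (y + z) \<le> periodic_ext f y + periodic_ext f z"
proof -
  note range = dist_int_range[of y] dist_int_range[of z] dist_int_range[of "y + z"]
  have subadd: "f (a + b) \<le> f a + f b" if "0 \<le> a" "0 \<le> b" "a + b \<le> 1/2" for a b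
    by (rule concave_subadditive[OF admissible_concave[OF f] admissible_nonneg[OF f]]) (use that in auto)
  show ?thesis
  proof (cases "dist_int y + dist_int z \<le> 1/2")
    case True
    have "f (dist_int (y + z)) \<le> f (dist_int y + dist_int z)"
      by (rule admissible_mono[OF f]) (use range True dist_int_add in auto)
    also have "\<dots> \<le> f (dist_int y) + f (dist_int z)" by (rule subadd) (use range True in auto)
    finally show ?thesis unfolding periodic_ext_def .
  next
    case False
    have "f (dist_int (y + z)) \<le> f (dist_int y + (1/2 - dist_int y))"
      by (rule admissible_mono[OF f]) (use range in auto)
    also have "\<dots> \<le> f (dist_int y) + f (1/2 - dist_int y)" by (rule subadd) (use range in auto)
    also have "f (1/2 - dist_int y) \<le> f (dist_int z)"
      by (rule admissible_mono[OF f]) (use range False in auto)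
    finally show ?thesis unfolding periodic_ext_def by simp
  qed
qed

lemma periodic_ext_uminus: "periodic_ext f (- y) = periodic_ext f y"
  unfolding periodic_ext_def by (simp add: dist_int_uminus)

text \<open>On \<open>[0,1]\<close> the periodic extension is \<open>f\<close> itself, thanks to the symmetry of \<open>f\<close>.\<close>
lemma periodic_ext_unit_interval:
  assumes f: "admissible f" and "0 \<le> y" "y \<le> 1"
  shows "periodic_ext f y = f y"
  using dist_int_unit_interval[OF assms(2,3)] admissible_symmetric[OF f] assms
  unfolding periodic_ext_def by (simp add: min_def)

lemma periodic_ext_abs:
  assumes f: "admissible f" and "\<bar>y\<bar> \<le> 1"
  shows "periodic_ext f y = f \<bar>y\<bar>"
  using periodic_ext_unit_interval[OF f, of "\<bar>y\<bar>"] periodic_ext_uminus[of f y] assms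
  by (cases "y \<ge> 0") simp_all

text \<open>If \<open>f (1/2) = 0\<close> then \<open>f\<close> vanishes on \<open>[0,1]\<close>, by symmetry and monotonicity.\<close>
lemma admissible_vanish:
  assumes f: "admissible f" and "f (1/2) = 0" "0 \<le> y" "y \<le> 1"
  shows "f y = 0"
proof -
  have "f y = f (dist_int y)" using periodic_ext_unit_interval[OF f] assms unfolding periodic_ext_def by simp
  also have "\<dots> \<le> f (1/2)" by (rule admissible_mono[OF f]) (use dist_int_range in auto)
  finally show ?thesis using assms admissible_nonneg[OF f, of y] by simp
qed

definition pot_diff :: "('e \<Rightarrow> 'v) \<Rightarrow> ('e \<Rightarrow> 'v) \<Rightarrow> ('v \<Rightarrow> int) \<Rightarrow> 'e \<Rightarrow> int" where
  "pot_diff src tgt x e = x (src e) - x (tgt e)"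

lemma rho_norm_cong: "(\<And>e. e \<in> E \<Longrightarrow> a e = b e) \<Longrightarrow> rho_norm E a = rho_norm E b"
  unfolding rho_norm_def by simp

lemma w_ext_cong: "(\<And>e. e \<in> E \<Longrightarrow> a e = b e) \<Longrightarrow> w_ext E w0 a = w_ext E w0 b"
  unfolding w_ext_def by simp

lemma w_ext_add: "w_ext E w0 (\<lambda>e. a e + b e) = w_ext E w0 a + w_ext E w0 b"
  unfolding w_ext_def by (simp add: sum.distrib distrib_right)

lemma cut_vec_pot_diff:
  "e \<in> E \<Longrightarrow> cut_vec E src tgt S e = pot_diff src tgt (\<lambda>u. if u \<in> S then 1 else 0) e"
  unfolding cut_vec_def pot_diff_def by auto

lemma cut_space_potential:
  assumes "\<phi> \<in> cut_space V E src tgt"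
  shows "\<exists>x. \<forall>e\<in>E. \<phi> e = pot_diff src tgt x e"
  using assms
proof induction
  case zero
  show ?case by (intro exI[of _ "\<lambda>_. 0"]) (simp add: pot_diff_def)
next
  case (gen S)
  show ?case by (intro exI[of _ "\<lambda>u. if u \<in> S then 1 else 0"]) (simp add: cut_vec_pot_diff)
next
  case (diff \<phi> \<psi>)
  then obtain x y where "\<forall>e\<in>E. \<phi> e = pot_diff src tgt x e" "\<forall>e\<in>E. \<psi> e = pot_diff src tgt y e"
    by blast
  then show ?case by (intro exI[of _ "\<lambda>u. x u - y u"]) (simp add: pot_diff_def)
qed

text \<open>A potential that is constant on the vertices (zero range) has vanishing differences on
  every edge; this is the base case of the layer-peeling induction.\<close>
lemma pot_diff_flat:
  assumes mg: "multigraph V E src tgt" and flat: "Max (x ` V) = Min (x ` V)" and e: "e \<in> E"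
  shows "pot_diff src tgt x e = 0"
proof -
  have fV: "finite V" and ends: "src e \<in> V" "tgt e \<in> V"
    using mg e unfolding multigraph_def by auto
  have "x u = Max (x ` V)" if "u \<in> V" for u
    using flat that fV by (metis Max_ge Min_le finite_imageI image_eqI order_antisym)
  then show ?thesis using ends unfolding pot_diff_def by simp
qed

lemma rho_norm_cut_vec:
  assumes "finite E"
  shows "rho_norm E (cut_vec E src tgt S) = int (cut_size E src tgt S)"
proof -
  have "rho_norm E (cut_vec E src tgt S) = (\<Sum>e\<in>E. if (src e \<in> S) \<noteq> (tgt e \<in> S) then 1 else 0)"
    unfolding rho_norm_def by (rule sum.cong) (auto simp: cut_vec_def)
  also have "\<dots> = int (cut_size E src tgt S)"
    unfolding cut_size_def using assms by (simp add: sum.inter_filter[symmetric])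
  finally show ?thesis .
qed

text \<open>The weight of an oriented cut, written as in the definition of a weight function.\<close>
lemma w_ext_cut_vec_split:
  assumes "finite E"
  shows "w_ext E w0 (cut_vec E src tgt S) =
    (\<Sum>e\<in>{e\<in>E. src e \<in> S \<and> tgt e \<notin> S}. w0 e) + (\<Sum>e\<in>{e\<in>E. tgt e \<in> S \<and> src e \<notin> S}. - w0 e)"
proof -
  have "w_ext E w0 (cut_vec E src tgt S) = (\<Sum>e\<in>E. (if src e \<in> S \<and> tgt e \<notin> S then w0 e else 0)
      + (if tgt e \<in> S \<and> src e \<notin> S then - w0 e else 0))"
    unfolding w_ext_def by (rule sum.cong) (auto simp: cut_vec_def)
  also have "\<dots> = (\<Sum>e\<in>{e\<in>E. src e \<in> S \<and> tgt e \<notin> S}. w0 e) + (\<Sum>e\<in>{e\<in>E. tgt e \<in> S \<and> src e \<notin> S}. - w0 e)"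
    using assms by (simp add: sum.distrib sum.inter_filter)
  finally show ?thesis .
qed

text \<open>The weight of a cut is \<open>|V - S|\<close> if the base vertex lies in \<open>S\<close> and \<open>-|S|\<close> otherwise
  (apply the defining property of \<open>w\<close> to the complement).\<close>
lemma w_ext_cut_vec:
  assumes mg: "multigraph V E src tgt" and wf: "weight_function V E src tgt v w0" and S: "S \<subseteq> V"
  shows "w_ext E w0 (cut_vec E src tgt S) = (if v \<in> S then int (card (V - S)) else - int (card S))"
proof -
  have fE: "finite E" and ends: "\<forall>e\<in>E. src e \<in> V \<and> tgt e \<in> V"
    using mg unfolding multigraph_def by auto
  have v: "v \<in> V" and wS: "\<And>T. v \<in> T \<Longrightarrow> T \<subseteq> V \<Longrightarrow> (\<Sum>e\<in>{e\<in>E. src e \<in> T \<and> tgt e \<notin> T}. w0 e)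
      + (\<Sum>e\<in>{e\<in>E. tgt e \<in> T \<and> src e \<notin> T}. - w0 e) = int (card (V - T))"
    using wf unfolding weight_function_def by blast+
  show ?thesis
  proof (cases "v \<in> S")
    case True
    then show ?thesis using wS[OF True S] w_ext_cut_vec_split[OF fE, of w0 src tgt S] by simp
  next
    case False
    have "{e\<in>E. src e \<in> V - S \<and> tgt e \<notin> V - S} = {e\<in>E. tgt e \<in> S \<and> src e \<notin> S}"
      "{e\<in>E. tgt e \<in> V - S \<and> src e \<notin> V - S} = {e\<in>E. src e \<in> S \<and> tgt e \<notin> S}"
      "V - (V - S) = S"
      using ends S by auto
    then have "(\<Sum>e\<in>{e\<in>E. tgt e \<in> S \<and> src e \<notin> S}. w0 e)
        + (\<Sum>e\<in>{e\<in>E. src e \<in> S \<and> tgt e \<notin> S}. - w0 e) = int (card S)"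
      using wS[of "V - S"] False v by auto
    then show ?thesis using w_ext_cut_vec_split[OF fE, of w0 src tgt S] False by (simp add: sum_negf)
  qed
qed

definition cut_balance :: "'v set \<Rightarrow> 'v set \<Rightarrow> real" where
  "cut_balance V S = real (min (card S) (card (V - S))) / real (card V)"

lemma card_complement: "finite V \<Longrightarrow> S \<subseteq> V \<Longrightarrow> card S + card (V - S) = card V"
  by (metis card_Diff_subset card_mono finite_subset le_add_diff_inverse)

lemma cut_balance_range:
  assumes "finite V" "S \<noteq> {}" "S \<subset> V"
  shows "0 < cut_balance V S" "cut_balance V S \<le> 1/2"
proof -
  have "card S > 0" "card (V - S) > 0"
    using assms by (auto simp: card_gt_0_iff intro: finite_subset)
  moreover have "card S + card (V - S) = card V" using card_complement assms by blast
  ultimately show "0 < cut_balance V S" "cut_balance V S \<le> 1/2"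
    unfolding cut_balance_def by (auto simp: min_def field_simps)
qed

lemma periodic_ext_cut_weight:
  assumes mg: "multigraph V E src tgt" and f: "admissible f"
    and wf: "weight_function V E src tgt v w0" and S: "S \<subseteq> V"
  shows "periodic_ext f (real_of_int (w_ext E w0 (cut_vec E src tgt S)) / real (card V))
       = f (cut_balance V S)"
proof -
  have fV: "finite V" using mg unfolding multigraph_def by simp
  have cs: "card S + card (V - S) = card V" using card_complement[OF fV S] .
  let ?n = "real (card V)"
  show ?thesis
  proof (cases "card V = 0")
    case True
    then show ?thesis using cs periodic_ext_unit_interval[OF f, of 0]
      by (simp add: w_ext_cut_vec[OF mg wf S] cut_balance_def)
  next
    case False
    then have n: "?n > 0" by simp
    have r: "real (card S) / ?n \<in> {0..1}" "real (card (V - S)) / ?n \<in> {0..1}"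
      using cs n by (auto simp: field_simps)
    have "real (card S) / ?n = 1 - real (card (V - S)) / ?n"
      using cs n by (simp add: field_simps flip: of_nat_add)
    then have same: "f (real (card S) / ?n) = f (real (card (V - S)) / ?n)"
      using admissible_symmetric[OF f] r by simp
    then have bal: "f (cut_balance V S) = f (real (card (V - S)) / ?n)"
      unfolding cut_balance_def by (cases "card S \<le> card (V - S)") (auto simp: min_def)
    show ?thesis
    proof (cases "v \<in> S")
      case True
      then show ?thesis
        using bal periodic_ext_unit_interval[OF f] r by (simp add: w_ext_cut_vec[OF mg wf S])
    next
      case False
      have "periodic_ext f (- real (card S) / ?n) = periodic_ext f (real (card S) / ?n)"
        using periodic_ext_uminus[of f "real (card S) / ?n"] by simp
      then show ?thesis
        using False bal same periodic_ext_unit_interval[OF f] r by (simp add: w_ext_cut_vec[OF mg wf S])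
    qed
  qed
qed

text \<open>Layer peeling: lowering a non-constant potential by one on its top level set \<open>S\<close> splits
  off the oriented cut of \<open>S\<close>, adds exactly the cut size to the norm (no cancellation, since
  every edge leaving \<open>S\<close> goes strictly downhill), and shrinks the range of the potential.\<close>
lemma peel_top_level_set:
  fixes x :: "'v \<Rightarrow> int"
  assumes mg: "multigraph V E src tgt" and Vne: "V \<noteq> {}" and nonconst: "Max (x ` V) \<noteq> Min (x ` V)"
    and S_def: "S = {u \<in> V. x u = Max (x ` V)}"
    and x'_def: "x' = (\<lambda>u. if u \<in> S then x u - 1 else x u)"
  shows "S \<noteq> {}" "S \<subset> V"
    and "\<And>e. e \<in> E \<Longrightarrow> pot_diff src tgt x e = pot_diff src tgt x' e + cut_vec E src tgt S e"
    and "rho_norm E (pot_diff src tgt x) = rho_norm E (pot_diff src tgt x') + int (cut_size E src tgt S)"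
    and "nat (Max (x' ` V) - Min (x' ` V)) < nat (Max (x ` V) - Min (x ` V))"
proof -
  have fE: "finite E" and fV: "finite V" and ends: "\<And>e. e \<in> E \<Longrightarrow> src e \<in> V \<and> tgt e \<in> V"
    using mg unfolding multigraph_def by auto
  define M where "M = Max (x ` V)"
  define m where "m = Min (x ` V)"
  have M: "M \<in> x ` V" "\<And>u. u \<in> V \<Longrightarrow> x u \<le> M" and m: "m \<in> x ` V" "\<And>u. u \<in> V \<Longrightarrow> m \<le> x u"
    unfolding M_def m_def using fV Vne by auto
  have "m < M" using nonconst M m unfolding M_def m_def by force
  obtain uM um where "uM \<in> V" "x uM = M" "um \<in> V" "x um = m" using M(1) m(1) by auto
  then have "uM \<in> S" "um \<in> V - S" using \<open>m < M\<close> unfolding S_def M_def by auto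
  then show "S \<noteq> {}" "S \<subset> V" unfolding S_def by auto
  have below: "\<And>u. u \<in> V \<Longrightarrow> u \<notin> S \<Longrightarrow> x u < M"
    using M unfolding S_def M_def by force
  show split: "pot_diff src tgt x e = pot_diff src tgt x' e + cut_vec E src tgt S e" if "e \<in> E" for e
    using that unfolding pot_diff_def x'_def cut_vec_def by auto
  have "\<bar>pot_diff src tgt x e\<bar> = \<bar>pot_diff src tgt x' e\<bar> + \<bar>cut_vec E src tgt S e\<bar>" if "e \<in> E" for e
    using ends[OF that] below[of "src e"] below[of "tgt e"] that
    unfolding pot_diff_def x'_def cut_vec_def S_def M_def by auto
  then have "rho_norm E (pot_diff src tgt x) = rho_norm E (pot_diff src tgt x') + rho_norm E (cut_vec E src tgt S)"
    unfolding rho_norm_def by (simp add: sum.distrib)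
  then show "rho_norm E (pot_diff src tgt x) = rho_norm E (pot_diff src tgt x') + int (cut_size E src tgt S)"
    using rho_norm_cut_vec[OF fE] by simp
  have "m \<le> x' u \<and> x' u \<le> M - 1" if "u \<in> V" for u
    using that below[OF that] M(2)[OF that] m(2)[OF that] \<open>m < M\<close> unfolding x'_def S_def M_def by auto
  then have "Max (x' ` V) \<le> M - 1" "m \<le> Min (x' ` V)"
    using fV Vne by (auto intro!: Max.boundedI Min.boundedI)
  moreover have "Min (x' ` V) \<le> Max (x' ` V)" using fV Vne by (intro Min_le Max_in) auto
  ultimately show "nat (Max (x' ` V) - Min (x' ` V)) < nat (Max (x ` V) - Min (x ` V))"
    unfolding M_def m_def by linarith
qed

lemma potential_bound:
  fixes h :: "int \<Rightarrow> real" and x :: "'v \<Rightarrow> int"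
  assumes mg: "multigraph V E src tgt" and Vne: "V \<noteq> {}"
    and subadd: "\<And>a b. h (a + b) \<le> h a + h b"
    and cuts: "\<And>S. S \<noteq> {} \<Longrightarrow> S \<subset> V \<Longrightarrow> h (w_ext E w0 (cut_vec E src tgt S)) \<le> real (cut_size E src tgt S)"
    and nonconst: "Max (x ` V) \<noteq> Min (x ` V)"
  shows "h (w_ext E w0 (pot_diff src tgt x)) \<le> real_of_int (rho_norm E (pot_diff src tgt x))"
  using nonconst
proof (induction "nat (Max (x ` V) - Min (x ` V))" arbitrary: x rule: less_induct)
  case less
  define S where "S = {u \<in> V. x u = Max (x ` V)}"
  define x' where "x' = (\<lambda>u. if u \<in> S then x u - 1 else x u)"
  note peel = peel_top_level_set[OF mg Vne less.prems S_def x'_def]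
  have w: "w_ext E w0 (pot_diff src tgt x)
      = w_ext E w0 (pot_diff src tgt x') + w_ext E w0 (cut_vec E src tgt S)"
    using w_ext_cong[of E "pot_diff src tgt x" "\<lambda>e. pot_diff src tgt x' e + cut_vec E src tgt S e"]
      peel(3) w_ext_add by simp
  have cut: "h (w_ext E w0 (cut_vec E src tgt S)) \<le> real (cut_size E src tgt S)"
    using cuts peel(1,2) .
  show ?case
  proof (cases "Max (x' ` V) = Min (x' ` V)")
    case True
    have "pot_diff src tgt x' e = 0" if "e \<in> E" for e
      using pot_diff_flat[OF mg True that] .
    then have "w_ext E w0 (pot_diff src tgt x') = 0" "rho_norm E (pot_diff src tgt x') = 0"
      unfolding w_ext_def rho_norm_def by simp_all
    then show ?thesis using w peel(4) cut by simp
  next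
    case False
    have IH: "h (w_ext E w0 (pot_diff src tgt x')) \<le> real_of_int (rho_norm E (pot_diff src tgt x'))"
      using less.hyps[OF peel(5) False] .
    have "h (w_ext E w0 (pot_diff src tgt x))
        \<le> h (w_ext E w0 (pot_diff src tgt x')) + h (w_ext E w0 (cut_vec E src tgt S))"
      unfolding w by (rule subadd)
    also have "\<dots> \<le> real_of_int (rho_norm E (pot_diff src tgt x')) + real (cut_size E src tgt S)"
      using IH cut by simp
    finally show ?thesis using peel(4) by simp
  qed
qed

lemma int_ratio_le_1: "\<bar>k\<bar> \<le> int n \<Longrightarrow> real_of_int \<bar>k\<bar> / real n \<le> 1"
proof -
  assume "\<bar>k\<bar> \<le> int n"
  then have "real_of_int \<bar>k\<bar> \<le> real n" by (metis of_int_le_iff of_int_of_nat_eq)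
  then show ?thesis by (cases "n = 0") (simp_all add: divide_le_eq_1)
qed

lemma d_cut_balance:
  "d_cut V E src tgt f S = (if f (cut_balance V S) = 0 then \<infinity>
     else ereal (real (cut_size E src tgt S) / f (cut_balance V S)))"
  unfolding d_cut_def cut_balance_def Let_def ..

lemma d_phi_cut_vec:
  assumes mg: "multigraph V E src tgt" and f: "admissible f"
    and wf: "weight_function V E src tgt v w0" and S: "S \<noteq> {}" "S \<subset> V"
  shows "d_phi V E f w0 (cut_vec E src tgt S) = d_cut V E src tgt f S"
proof -
  have fE: "finite E" and fV: "finite V" using mg unfolding multigraph_def by auto
  define k where "k = w_ext E w0 (cut_vec E src tgt S)"
  have k: "k = (if v \<in> S then int (card (V - S)) else - int (card S))"
    unfolding k_def using w_ext_cut_vec[OF mg wf] S by auto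
  have "card S > 0" "card (V - S) > 0"
    using S fV by (auto simp: card_gt_0_iff intro: finite_subset)
  moreover have "card S + card (V - S) = card V" using card_complement[OF fV] S by auto
  ultimately have k0: "k \<noteq> 0" and kn: "\<bar>k\<bar> \<le> int (card V)"
    using k by auto
  have "\<bar>real_of_int k / real (card V)\<bar> \<le> 1"
    using int_ratio_le_1[OF kn] by simp
  then have "f (real_of_int \<bar>k\<bar> / real (card V)) = periodic_ext f (real_of_int k / real (card V))"
    using periodic_ext_abs[OF f] by simp
  also have "\<dots> = f (cut_balance V S)"
    unfolding k_def using periodic_ext_cut_weight[OF mg f wf] S by auto
  finally show ?thesis
    unfolding d_phi_def d_cut_balance Let_def k_def[symmetric]
    using k0 kn rho_norm_cut_vec[OF fE, of src tgt S] by simp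
qed

lemma d_phi_infinite:
  assumes f: "admissible f" and half: "f (1/2) = 0"
  shows "d_phi V E f w0 \<phi> = \<infinity>"
proof -
  define k where "k = w_ext E w0 \<phi>"
  have "f (real_of_int \<bar>k\<bar> / real (card V)) = 0" if "\<bar>k\<bar> \<le> int (card V)"
  proof (rule admissible_vanish[OF f half])
    show "0 \<le> real_of_int \<bar>k\<bar> / real (card V)" by simp
    show "real_of_int \<bar>k\<bar> / real (card V) \<le> 1"
      using int_ratio_le_1[OF that] .
  qed
  then show ?thesis unfolding d_phi_def Let_def k_def[symmetric] by force
qed

text \<open>If every proper cut satisfies \<open>r * f (b S) \<le> |[S]|\<close>, then \<open>r \<le> d_phi \<phi>\<close> on the whole cut
  space: apply \<open>potential_bound\<close> to \<open>h k = r * F (k/n)\<close>.\<close>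
lemma d_phi_lower_bound:
  assumes mg: "multigraph V E src tgt" and f: "admissible f"
    and wf: "weight_function V E src tgt v w0" and Vne: "V \<noteq> {}" and r0: "0 \<le> r"
    and cuts: "\<And>S. S \<noteq> {} \<Longrightarrow> S \<subset> V \<Longrightarrow> r * f (cut_balance V S) \<le> real (cut_size E src tgt S)"
    and \<phi>: "\<phi> \<in> cut_space V E src tgt"
  shows "ereal r \<le> d_phi V E f w0 \<phi>"
proof -
  let ?n = "real (card V)"
  obtain x where x: "\<And>e. e \<in> E \<Longrightarrow> \<phi> e = pot_diff src tgt x e"
    using cut_space_potential[OF \<phi>] by blast
  define k where "k = w_ext E w0 \<phi>"
  have k: "k = w_ext E w0 (pot_diff src tgt x)" and rho: "rho_norm E \<phi> = rho_norm E (pot_diff src tgt x)"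
    unfolding k_def using x by (auto intro: w_ext_cong rho_norm_cong)
  show ?thesis
  proof (cases "k = 0 \<or> \<bar>k\<bar> > int (card V) \<or> f (real_of_int \<bar>k\<bar> / ?n) = 0")
    case True
    then show ?thesis unfolding d_phi_def Let_def k_def[symmetric] by auto
  next
    case False
    have nonconst: "Max (x ` V) \<noteq> Min (x ` V)"
    proof
      assume flat: "Max (x ` V) = Min (x ` V)"
      have "pot_diff src tgt x e = 0" if "e \<in> E" for e
        using pot_diff_flat[OF mg flat that] .
      then have "k = 0" unfolding k w_ext_def by simp
      with False show False by simp
    qed
    have kn: "real_of_int \<bar>k\<bar> / ?n \<le> 1" using False int_ratio_le_1[of k "card V"] by simp
    have "r * periodic_ext f (real_of_int k / ?n) \<le> real_of_int (rho_norm E \<phi>)"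
      unfolding k rho
    proof (rule potential_bound[OF mg Vne _ _ nonconst])
      show "r * periodic_ext f (real_of_int (a + b) / ?n)
          \<le> r * periodic_ext f (real_of_int a / ?n) + r * periodic_ext f (real_of_int b / ?n)" for a b
        using mult_left_mono[OF periodic_ext_add[OF f] r0]
        by (simp add: add_divide_distrib distrib_left)
      show "r * periodic_ext f (real_of_int (w_ext E w0 (cut_vec E src tgt S)) / ?n)
          \<le> real (cut_size E src tgt S)" if "S \<noteq> {}" "S \<subset> V" for S
        using cuts[OF that] periodic_ext_cut_weight[OF mg f wf] that by auto
    qed
    moreover have "\<bar>real_of_int k / ?n\<bar> \<le> 1" using kn by simp
    then have "periodic_ext f (real_of_int k / ?n) = f (real_of_int \<bar>k\<bar> / ?n)"
      using periodic_ext_abs[OF f] by simp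
    moreover have "f (real_of_int \<bar>k\<bar> / ?n) > 0"
      using False admissible_nonneg[OF f, of "real_of_int \<bar>k\<bar> / ?n"] kn by simp
    ultimately have "r \<le> real_of_int (rho_norm E \<phi>) / f (real_of_int \<bar>k\<bar> / ?n)"
      by (simp add: field_simps)
    then show ?thesis unfolding d_phi_def Let_def k_def[symmetric] using False by simp
  qed
qed

lemma proper_subsets_finite_nonempty:
  assumes "finite V" "card V \<ge> 2"
  shows "finite {S. S \<noteq> {} \<and> S \<subset> V}" "{S. S \<noteq> {} \<and> S \<subset> V} \<noteq> {}"
proof -
  have "{S. S \<noteq> {} \<and> S \<subset> V} \<subseteq> Pow V" by auto
  then show "finite {S. S \<noteq> {} \<and> S \<subset> V}" using assms(1) by (simp add: finite_subset)
  obtain u where u: "u \<in> V" using assms by fastforce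
  have "V \<noteq> {u}" using assms by auto
  then have "{u} \<in> {S. S \<noteq> {} \<and> S \<subset> V}" using u by auto
  then show "{S. S \<noteq> {} \<and> S \<subset> V} \<noteq> {}" by blast
qed

lemma exists_cut_below:
  assumes mg: "multigraph V E src tgt" and f: "admissible f"
    and wf: "weight_function V E src tgt v w0" and two: "card V \<ge> 2"
    and \<phi>: "\<phi> \<in> cut_space V E src tgt"
  shows "\<exists>S. S \<noteq> {} \<and> S \<subset> V \<and> d_cut V E src tgt f S \<le> d_phi V E f w0 \<phi>"
proof -
  define SS where "SS = {S. S \<noteq> {} \<and> S \<subset> V}"
  have fV: "finite V" using mg unfolding multigraph_def by simp
  note SS = proper_subsets_finite_nonempty[OF fV two, folded SS_def]
  show ?thesis
  proof (cases "f (1/2) = 0")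
    case True
    from SS(2) obtain S where "S \<in> SS" by blast
    then show ?thesis
      unfolding SS_def d_phi_infinite[OF f True] by (intro exI[of _ S]) simp
  next
    case False
    then have half: "f (1/2) > 0" using admissible_nonneg[OF f, of "1/2"] by simp
    have pos: "f (cut_balance V S) > 0" if "S \<in> SS" for S
    proof (rule admissible_pos[OF f half])
      show "0 < cut_balance V S" "cut_balance V S \<le> 1/2"
        using cut_balance_range[OF fV] that unfolding SS_def by auto
    qed
    define ratio where "ratio S = real (cut_size E src tgt S) / f (cut_balance V S)" for S
    have "Min (ratio ` SS) \<in> ratio ` SS" using SS by (intro Min_in) auto
    then obtain S0 where S0: "S0 \<in> SS" "ratio S0 = Min (ratio ` SS)" by auto
    have cuts: "ratio S0 * f (cut_balance V S) \<le> real (cut_size E src tgt S)"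
      if "S \<noteq> {}" "S \<subset> V" for S
    proof -
      have S: "S \<in> SS" using that unfolding SS_def by simp
      have "ratio S0 \<le> ratio S" unfolding S0(2) using SS S by (intro Min_le) auto
      then show ?thesis using pos[OF S] unfolding ratio_def[of S] by (simp add: le_divide_eq)
    qed
    have r0: "0 \<le> ratio S0" using pos[OF S0(1)] unfolding ratio_def by simp
    have Vne: "V \<noteq> {}" using two by auto
    have "ereal (ratio S0) \<le> d_phi V E f w0 \<phi>"
      using d_phi_lower_bound[OF mg f wf Vne r0 cuts \<phi>] .
    moreover have "d_cut V E src tgt f S0 = ereal (ratio S0)"
      using pos[OF S0(1)] unfolding d_cut_balance ratio_def by simp
    ultimately show ?thesis using S0(1) unfolding SS_def by (intro exI[of _ S0]) simp
  qed
qed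

lemma d_graph_min:
  assumes fV: "finite V" and two: "card V \<ge> 2"
  shows "\<exists>S. S \<noteq> {} \<and> S \<subset> V \<and> d_graph V E src tgt f = d_cut V E src tgt f S"
    and "S \<noteq> {} \<Longrightarrow> S \<subset> V \<Longrightarrow> d_graph V E src tgt f \<le> d_cut V E src tgt f S"
proof -
  define SS where "SS = {S. S \<noteq> {} \<and> S \<subset> V}"
  note SS = proper_subsets_finite_nonempty[OF fV two, folded SS_def]
  have dg: "d_graph V E src tgt f = Min (d_cut V E src tgt f ` SS)"
    unfolding d_graph_def SS_def ..
  have "d_graph V E src tgt f \<in> d_cut V E src tgt f ` SS"
    unfolding dg using SS by (intro Min_in) auto
  then show "\<exists>S. S \<noteq> {} \<and> S \<subset> V \<and> d_graph V E src tgt f = d_cut V E src tgt f S"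
    unfolding SS_def by blast
  show "d_graph V E src tgt f \<le> d_cut V E src tgt f S" if "S \<noteq> {}" "S \<subset> V"
  proof -
    have "S \<in> SS" using that unfolding SS_def by simp
    then show ?thesis unfolding dg using SS(1) by (intro Min_le finite_imageI imageI)
  qed
qed

theorem lemma3:
  fixes V :: "'v set" and E :: "'e set" and src tgt :: "'e \<Rightarrow> 'v"
    and f :: "real \<Rightarrow> real" and v :: 'v and w0 :: "'e \<Rightarrow> int"
  assumes "multigraph V E src tgt" and "loopless E src tgt"
    and "connected_mg V E src tgt" and "card V \<ge> 2"
    and "admissible f"
    and "weight_function V E src tgt v w0"
  shows "(\<forall>\<phi>\<in>cut_space V E src tgt. \<exists>S. S \<noteq> {} \<and> S \<subset> V \<and>
            d_cut V E src tgt f S \<le> d_phi V E f w0 \<phi>)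
       \<and> d_graph V E src tgt f \<in> d_phi V E f w0 ` cut_space V E src tgt
       \<and> (\<forall>\<phi>\<in>cut_space V E src tgt. d_graph V E src tgt f \<le> d_phi V E f w0 \<phi>)"
proof -
  note mg = assms(1) and two = assms(4) and f = assms(5) and wf = assms(6)
  have fV: "finite V" using mg unfolding multigraph_def by simp
  have below: "\<exists>S. S \<noteq> {} \<and> S \<subset> V \<and> d_cut V E src tgt f S \<le> d_phi V E f w0 \<phi>"
    if "\<phi> \<in> cut_space V E src tgt" for \<phi>
    using exists_cut_below[OF mg f wf two that] .
  obtain S1 where S1: "S1 \<noteq> {}" "S1 \<subset> V" "d_graph V E src tgt f = d_cut V E src tgt f S1"
    using d_graph_min(1)[OF fV two, where E = E and src = src and tgt = tgt and f = f] by blast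
  have "d_graph V E src tgt f = d_phi V E f w0 (cut_vec E src tgt S1)"
    using S1 d_phi_cut_vec[OF mg f wf S1(1,2)] by simp
  moreover have "cut_vec E src tgt S1 \<in> cut_space V E src tgt"
    using S1(2) by (simp add: cut_space.gen psubset_imp_subset)
  ultimately have attained: "d_graph V E src tgt f \<in> d_phi V E f w0 ` cut_space V E src tgt"
    by (rule image_eqI)
  have lower: "d_graph V E src tgt f \<le> d_phi V E f w0 \<phi>" if \<phi>: "\<phi> \<in> cut_space V E src tgt" for \<phi>
  proof -
    obtain S where S: "S \<noteq> {}" "S \<subset> V" and le: "d_cut V E src tgt f S \<le> d_phi V E f w0 \<phi>"
      using below[OF \<phi>] by blast
    have "d_graph V E src tgt f \<le> d_cut V E src tgt f S" using S by (rule d_graph_min(2)[OF fV two])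
    then show ?thesis using le by (rule order_trans)
  qed
  show ?thesis by (intro conjI ballI below attained lower)
qed

end
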